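(* Let $E$ be a finite-dimensional real or complex inner product space with an orthogonal direct sum decomposition $E=X_1\oplus X_2\oplus Y$. Fix $a_1\in X_1$, $a_2\in X_2$, $b_1,b_2\in Y$, and let $C_1=X_1+a_2+b_1$ and $C_2=a_1+X_2+b_2$. Let $\pi_i\colon E\to E$ be the orthogonal (nearest-point) projection onto the affine subspace $C_i$, $i=1,2$. For real $\gamma_1,\gamma_2$ and nonzero real $\beta$ define $f_i(\rho)=(1+\gamma_i)\pi_i(\rho)-\gamma_i\rho$ and $D(\rho)=\rho+\beta\big(\pi_1(f_2(\rho))-\pi_2(f_1(\rho))\big)$. Then for all $x_1\in X_1$, $x_2\in X_2$, $y\in Y$, $$D(x_1+x_2+y)=a_1+a_2+y+(1-\beta\gamma_2)(x_1-a_1)+(1+\beta\gamma_1)(x_2-a_2)+\beta(b_1-b_2).$$ Consequently: (i) if $b_1=b_2=b$, the iterates $D^n(\rho)$ converge for every starting point $\rho=x_1+x_2+y$ to the point $\rho^*=a_1+a_2+y$ whenever $0<\beta\gamma_2<2$ and $-2<\beta\gamma_1<0$, and $\pi_1(f_2(\rho^* ))=a_1+a_2+b\in C_1\cap C_2$; (ii) for the choice $\gamma_2=\beta^{-1}$, $\gamma_1=-\beta^{-1}$ one has, for all $n\ge 1$, $D^n(x_1+x_2+y)=a_1+a_2+y+n\beta(b_1-b_2)$; in particular, when $b_1=b_2$ every point is mapped to a fixed point of $D$ in a single iteration.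
   Context: This describes the local behaviour of the "difference map" built from two projections near a point where two (locally affine, mutually orthogonal) constraint sets $C_1$, $C_2$ either intersect ($b_1=b_2$) or come closest without intersecting ($b_1\ne b_2$). *)

theory Defs
  imports "HOL-Analysis.Analysis"
begin

definition relax :: "('a::real_vector \<Rightarrow> 'a) \<Rightarrow> real \<Rightarrow> 'a \<Rightarrow> 'a" where
  "relax p g \<rho> = (1 + g) *\<^sub>R p \<rho> - g *\<^sub>R \<rho>"

definition diffmap :: "'a::euclidean_space set \<Rightarrow> 'a set \<Rightarrow> real \<Rightarrow> real \<Rightarrow> real \<Rightarrow> 'a \<Rightarrow> 'a" where
  "diffmap C1 C2 \<beta> g1 g2 \<rho> =
     \<rho> + \<beta> *\<^sub>R (closest_point C1 (relax (closest_point C2) g2 \<rho>)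
                 - closest_point C2 (relax (closest_point C1) g1 \<rho>))"

end

theory Submission
  imports Defs
begin

text \<open>Both projections act componentwise on X1 \<oplus> X2 \<oplus> Y: the projection onto C1
  keeps the X1-component and replaces the others by a2 and b1, the projection onto C2 keeps the
  X2-component and replaces the others by a1 and b2. Hence D is affine and diagonal in this
  decomposition: it contracts the X1-component towards a1 by the factor 1 - \<beta>\<gamma>2, the
  X2-component towards a2 by the factor 1 + \<beta>\<gamma>1, and translates the Y-component by
  \<beta>(b1 - b2).\<close>

lemma closest_point_translated_subspace:
  fixes X :: "'a::euclidean_space set"
  assumes X: "subspace X" and p: "p - c \<in> X" and orth: "\<forall>x\<in>X. orthogonal (r - p) x"
  shows "closest_point ((\<lambda>x. x + c) ` X) r = p"
proof -
  let ?S = "(\<lambda>x. x + c) ` X"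
  have S: "?S = (+) c ` X" by (auto simp: add.commute)
  have "convex ?S" unfolding S using convex_translation subspace_imp_convex[OF X] by blast
  moreover have "closed ?S" unfolding S using closed_translation closed_subspace[OF X] by blast
  moreover have "p \<in> ?S" using p by (auto intro!: image_eqI[where x="p - c"])
  moreover have "dist r p \<le> dist r z" if "z \<in> ?S" for z
  proof -
    from that obtain x where "x \<in> X" "z = x + c" by auto
    then have "p - z \<in> X" using p subspace_diff[OF X] by (metis diff_diff_eq2 diff_add_cancel)
    then have "(norm (r - z))\<^sup>2 = (norm (r - p))\<^sup>2 + (norm (p - z))\<^sup>2"
      using orth norm_add_Pythagorean[of "r - p" "p - z"] by simp
    then have "(norm (r - p))\<^sup>2 \<le> (norm (r - z))\<^sup>2" by simp
    then show ?thesis unfolding dist_norm by (rule power2_le_imp_le) simp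
  qed
  ultimately show ?thesis by (metis closest_point_unique)
qed

locale orthogonal_affine_pair =
  fixes X1 X2 Y :: "'a::euclidean_space set"
    and a1 a2 b1 b2 :: 'a
    and C1 C2 :: "'a set"
  assumes subspace_X1: "subspace X1" and subspace_X2: "subspace X2" and subspace_Y: "subspace Y"
    and orthogonal_X1_X2: "\<forall>x\<in>X1. \<forall>z\<in>X2. inner x z = 0"
    and orthogonal_X1_Y: "\<forall>x\<in>X1. \<forall>z\<in>Y. inner x z = 0"
    and orthogonal_X2_Y: "\<forall>x\<in>X2. \<forall>z\<in>Y. inner x z = 0"
    and a1: "a1 \<in> X1" and a2: "a2 \<in> X2" and b1: "b1 \<in> Y" and b2: "b2 \<in> Y"
    and C1_eq: "C1 = (\<lambda>x. x + a2 + b1) ` X1"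
    and C2_eq: "C2 = (\<lambda>x. a1 + x + b2) ` X2"
begin

lemma closest_point_C1:
  assumes "x1 \<in> X1" "x2 \<in> X2" "y \<in> Y"
  shows "closest_point C1 (x1 + x2 + y) = x1 + a2 + b1"
proof -
  have "C1 = (\<lambda>x. x + (a2 + b1)) ` X1" using C1_eq by (simp add: add.assoc)
  moreover have "orthogonal (x1 + x2 + y - (x1 + a2 + b1)) x" if "x \<in> X1" for x
  proof -
    have "x2 - a2 \<in> X2" "y - b1 \<in> Y"
      using assms a2 b1 subspace_diff subspace_X2 subspace_Y by blast+
    then have "orthogonal (x2 - a2) x" "orthogonal (y - b1) x"
      using that orthogonal_X1_X2 orthogonal_X1_Y by (auto simp: orthogonal_def inner_commute)
    then have "orthogonal ((x2 - a2) + (y - b1)) x" by (simp add: orthogonal_clauses)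
    moreover have "x1 + x2 + y - (x1 + a2 + b1) = (x2 - a2) + (y - b1)" by (simp add: algebra_simps)
    ultimately show ?thesis by metis
  qed
  ultimately show ?thesis
    using closest_point_translated_subspace[OF subspace_X1] assms by simp
qed

lemma closest_point_C2:
  assumes "x1 \<in> X1" "x2 \<in> X2" "y \<in> Y"
  shows "closest_point C2 (x1 + x2 + y) = a1 + x2 + b2"
proof -
  have "C2 = (\<lambda>x. x + (a1 + b2)) ` X2" using C2_eq by (simp add: algebra_simps)
  moreover have "orthogonal (x1 + x2 + y - (a1 + x2 + b2)) x" if "x \<in> X2" for x
  proof -
    have "x1 - a1 \<in> X1" "y - b2 \<in> Y"
      using assms a1 b2 subspace_diff subspace_X1 subspace_Y by blast+
    then have "orthogonal (x1 - a1) x" "orthogonal (y - b2) x"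
      using that orthogonal_X1_X2 orthogonal_X2_Y by (auto simp: orthogonal_def inner_commute)
    then have "orthogonal ((x1 - a1) + (y - b2)) x" by (simp add: orthogonal_clauses)
    moreover have "x1 + x2 + y - (a1 + x2 + b2) = (x1 - a1) + (y - b2)" by (simp add: algebra_simps)
    ultimately show ?thesis by metis
  qed
  ultimately show ?thesis
    using closest_point_translated_subspace[OF subspace_X2, of "a1 + x2 + b2" "a1 + b2"] assms
    by (simp add: algebra_simps)
qed

lemma diffmap_decomposed:
  assumes x1: "x1 \<in> X1" and x2: "x2 \<in> X2" and y: "y \<in> Y"
  shows "diffmap C1 C2 \<beta> g1 g2 (x1 + x2 + y) =
    a1 + a2 + y + (1 - \<beta> * g2) *\<^sub>R (x1 - a1) + (1 + \<beta> * g1) *\<^sub>R (x2 - a2) + \<beta> *\<^sub>R (b1 - b2)"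
proof -
  have relax2: "relax (closest_point C2) g2 (x1 + x2 + y) =
      ((1 + g2) *\<^sub>R a1 - g2 *\<^sub>R x1) + x2 + ((1 + g2) *\<^sub>R b2 - g2 *\<^sub>R y)"
    unfolding relax_def closest_point_C2[OF assms] by (simp add: algebra_simps)
  have relax1: "relax (closest_point C1) g1 (x1 + x2 + y) =
      x1 + ((1 + g1) *\<^sub>R a2 - g1 *\<^sub>R x2) + ((1 + g1) *\<^sub>R b1 - g1 *\<^sub>R y)"
    unfolding relax_def closest_point_C1[OF assms] by (simp add: algebra_simps)
  have u1: "(1 + g2) *\<^sub>R a1 - g2 *\<^sub>R x1 \<in> X1" and v2: "(1 + g2) *\<^sub>R b2 - g2 *\<^sub>R y \<in> Y"
    and u2: "(1 + g1) *\<^sub>R a2 - g1 *\<^sub>R x2 \<in> X2" and v1: "(1 + g1) *\<^sub>R b1 - g1 *\<^sub>R y \<in> Y"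
    using assms a1 a2 b1 b2 subspace_X1 subspace_X2 subspace_Y
    by (simp_all add: subspace_diff subspace_mul)
  show ?thesis
    unfolding diffmap_def relax1 relax2 closest_point_C1[OF u1 x2 v2] closest_point_C2[OF x1 u2 v1]
    by (simp add: algebra_simps)
qed

lemma diffmap_iterate:
  assumes x1: "x1 \<in> X1" and x2: "x2 \<in> X2" and y: "y \<in> Y"
  shows "(diffmap C1 C2 \<beta> g1 g2 ^^ n) (x1 + x2 + y) =
    a1 + a2 + (y + (real n * \<beta>) *\<^sub>R (b1 - b2))
    + (1 - \<beta> * g2) ^ n *\<^sub>R (x1 - a1) + (1 + \<beta> * g1) ^ n *\<^sub>R (x2 - a2)"
proof (induction n)
  case 0
  show ?case by simp
next
  case (Suc n)
  define x1' where "x1' = a1 + (1 - \<beta> * g2) ^ n *\<^sub>R (x1 - a1)"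
  define x2' where "x2' = a2 + (1 + \<beta> * g1) ^ n *\<^sub>R (x2 - a2)"
  define y' where "y' = y + (real n * \<beta>) *\<^sub>R (b1 - b2)"
  have "x1' \<in> X1" "x2' \<in> X2" "y' \<in> Y"
    unfolding x1'_def x2'_def y'_def
    using assms a1 a2 b1 b2 subspace_X1 subspace_X2 subspace_Y
    by (simp_all add: subspace_add subspace_diff subspace_mul)
  moreover have "(diffmap C1 C2 \<beta> g1 g2 ^^ n) (x1 + x2 + y) = x1' + x2' + y'"
    unfolding Suc x1'_def x2'_def y'_def by (simp add: algebra_simps)
  ultimately have "(diffmap C1 C2 \<beta> g1 g2 ^^ Suc n) (x1 + x2 + y) =
      a1 + a2 + y' + (1 - \<beta> * g2) *\<^sub>R (x1' - a1) + (1 + \<beta> * g1) *\<^sub>R (x2' - a2)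
      + \<beta> *\<^sub>R (b1 - b2)"
    by (simp add: diffmap_decomposed)
  then show ?case
    by (simp add: x1'_def x2'_def y'_def algebra_simps)
qed

lemma diffmap_iterate_tendsto:
  assumes "b1 = b2" and "\<bar>1 - \<beta> * g2\<bar> < 1" and "\<bar>1 + \<beta> * g1\<bar> < 1"
    and "x1 \<in> X1" "x2 \<in> X2" "y \<in> Y"
  shows "(\<lambda>n. (diffmap C1 C2 \<beta> g1 g2 ^^ n) (x1 + x2 + y)) \<longlonglongrightarrow> a1 + a2 + y"
proof -
  have q2: "(\<lambda>n. (1 - \<beta> * g2) ^ n) \<longlonglongrightarrow> 0" and q1: "(\<lambda>n. (1 + \<beta> * g1) ^ n) \<longlonglongrightarrow> 0"
    using assms(2,3) by (simp_all add: LIMSEQ_power_zero)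
  have "(\<lambda>n. a1 + a2 + y + (1 - \<beta> * g2) ^ n *\<^sub>R (x1 - a1) + (1 + \<beta> * g1) ^ n *\<^sub>R (x2 - a2))
      \<longlonglongrightarrow> a1 + a2 + y + 0 *\<^sub>R (x1 - a1) + 0 *\<^sub>R (x2 - a2)"
    by (intro tendsto_intros q1 q2)
  then show ?thesis
    using assms(1,4-6) by (simp add: diffmap_iterate)
qed

lemma closest_point_relax_limit:
  assumes "y \<in> Y"
  shows "closest_point C1 (relax (closest_point C2) g2 (a1 + a2 + y)) = a1 + a2 + b1"
proof -
  have "relax (closest_point C2) g2 (a1 + a2 + y) = a1 + a2 + ((1 + g2) *\<^sub>R b2 - g2 *\<^sub>R y)"
    unfolding relax_def closest_point_C2[OF a1 a2 assms] by (simp add: algebra_simps)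
  moreover have "(1 + g2) *\<^sub>R b2 - g2 *\<^sub>R y \<in> Y"
    using assms b2 subspace_Y by (simp add: subspace_diff subspace_mul)
  ultimately show ?thesis
    using closest_point_C1[OF a1 a2] by simp
qed

lemma mem_C1_Int_C2: "b1 = b2 \<Longrightarrow> a1 + a2 + b1 \<in> C1 \<inter> C2"
  using a1 a2 unfolding C1_eq C2_eq by (auto simp: algebra_simps)

lemma diffmap_inverse_iterate:
  assumes "\<beta> \<noteq> 0" "n \<ge> 1" "x1 \<in> X1" "x2 \<in> X2" "y \<in> Y"
  shows "(diffmap C1 C2 \<beta> (- inverse \<beta>) (inverse \<beta>) ^^ n) (x1 + x2 + y) =
    a1 + a2 + y + (real n * \<beta>) *\<^sub>R (b1 - b2)"
  using assms diffmap_iterate[OF assms(3-5), of n \<beta> "- inverse \<beta>" "inverse \<beta>"]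
  by (simp add: power_0_left)

lemma diffmap_inverse_idempotent:
  assumes "\<beta> \<noteq> 0" "b1 = b2"
    and span: "{x1 + x2 + y | x1 x2 y. x1 \<in> X1 \<and> x2 \<in> X2 \<and> y \<in> Y} = UNIV"
  shows "diffmap C1 C2 \<beta> (- inverse \<beta>) (inverse \<beta>) (diffmap C1 C2 \<beta> (- inverse \<beta>) (inverse \<beta>) \<rho>)
    = diffmap C1 C2 \<beta> (- inverse \<beta>) (inverse \<beta>) \<rho>"
proof -
  let ?D = "diffmap C1 C2 \<beta> (- inverse \<beta>) (inverse \<beta>)"
  obtain x1 x2 y where x: "x1 \<in> X1" "x2 \<in> X2" "y \<in> Y" and \<rho>: "\<rho> = x1 + x2 + y"
    using span by blast
  have "?D (?D \<rho>) = (?D ^^ 2) \<rho>" by (simp add: numeral_2_eq_2)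
  also have "\<dots> = (?D ^^ 1) \<rho>"
    unfolding \<rho> using assms(1,2) x by (simp add: diffmap_inverse_iterate del: funpow.simps)
  finally show ?thesis by simp
qed

end

theorem mainTheorem3:
  fixes X1 X2 Y :: "'a::euclidean_space set"
    and a1 a2 b1 b2 :: 'a
    and g1 g2 \<beta> :: real
  assumes "subspace X1" and "subspace X2" and "subspace Y"
    and "\<forall>x\<in>X1. \<forall>z\<in>X2. inner x z = 0"
    and "\<forall>x\<in>X1. \<forall>z\<in>Y. inner x z = 0"
    and "\<forall>x\<in>X2. \<forall>z\<in>Y. inner x z = 0"
    and "{x1 + x2 + y | x1 x2 y. x1 \<in> X1 \<and> x2 \<in> X2 \<and> y \<in> Y} = UNIV"
    and "a1 \<in> X1" and "a2 \<in> X2" and "b1 \<in> Y" and "b2 \<in> Y"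
    and "C1 = (\<lambda>x. x + a2 + b1) ` X1"
    and "C2 = (\<lambda>x. a1 + x + b2) ` X2"
    and "\<beta> \<noteq> 0"
  shows
    "(\<forall>x1\<in>X1. \<forall>x2\<in>X2. \<forall>y\<in>Y.
        diffmap C1 C2 \<beta> g1 g2 (x1 + x2 + y) =
          a1 + a2 + y + (1 - \<beta> * g2) *\<^sub>R (x1 - a1) + (1 + \<beta> * g1) *\<^sub>R (x2 - a2)
          + \<beta> *\<^sub>R (b1 - b2))
   \<and> ((b1 = b2 \<and> 0 < \<beta> * g2 \<and> \<beta> * g2 < 2 \<and> -2 < \<beta> * g1 \<and> \<beta> * g1 < 0) \<longrightarrow>
        (\<forall>x1\<in>X1. \<forall>x2\<in>X2. \<forall>y\<in>Y.
           (\<lambda>n. (diffmap C1 C2 \<beta> g1 g2 ^^ n) (x1 + x2 + y)) \<longlonglongrightarrow> a1 + a2 + y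
           \<and> closest_point C1 (relax (closest_point C2) g2 (a1 + a2 + y)) = a1 + a2 + b1
           \<and> a1 + a2 + b1 \<in> C1 \<inter> C2))
   \<and> (\<forall>n::nat. n \<ge> 1 \<longrightarrow> (\<forall>x1\<in>X1. \<forall>x2\<in>X2. \<forall>y\<in>Y.
        (diffmap C1 C2 \<beta> (- inverse \<beta>) (inverse \<beta>) ^^ n) (x1 + x2 + y) =
          a1 + a2 + y + (real n * \<beta>) *\<^sub>R (b1 - b2)))
   \<and> (b1 = b2 \<longrightarrow> (\<forall>\<rho>.
        diffmap C1 C2 \<beta> (- inverse \<beta>) (inverse \<beta>)
          (diffmap C1 C2 \<beta> (- inverse \<beta>) (inverse \<beta>) \<rho>)
        = diffmap C1 C2 \<beta> (- inverse \<beta>) (inverse \<beta>) \<rho>))"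
proof -
  interpret orthogonal_affine_pair X1 X2 Y a1 a2 b1 b2 C1 C2
    using assms by unfold_locales
  have contraction: "\<bar>1 - \<beta> * g2\<bar> < 1 \<and> \<bar>1 + \<beta> * g1\<bar> < 1"
    if "0 < \<beta> * g2 \<and> \<beta> * g2 < 2 \<and> -2 < \<beta> * g1 \<and> \<beta> * g1 < 0"
    using that by linarith
  show ?thesis
    using diffmap_decomposed diffmap_iterate_tendsto[OF _ contraction[THEN conjunct1] contraction[THEN conjunct2]]
      closest_point_relax_limit mem_C1_Int_C2 diffmap_inverse_iterate[OF \<open>\<beta> \<noteq> 0\<close>]
      diffmap_inverse_idempotent[OF \<open>\<beta> \<noteq> 0\<close> _ assms(7)]
    by blast
qed

end
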